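(* There is a PCR/$\mathbb{Q}$ refutation of $Q_n$ of degree $2$ and monomial-size polynomial in $n$.
   Context: For each $i\in[n]$ and $j\in[2n]$ there is a pair of twin variables $x_{ij},\bar x_{ij}$. Let $\mathrm{ks}_i=\sum_{j\in[2n]}x_{ij}-n$. $Q_n$ is the set of constraints: (I) $\mathrm{ks}_1=1/2$; (II) $\mathrm{ks}_i^2=\mathrm{ks}_{i+1}$ for each $i\in[n-1]$; (III) $\mathrm{ks}_n^2=0$ (each written as polynomial $=0$). A PCR/$\mathbb{Q}$ proof of $p=0$ from $Q$ is a sequence $p_1,\dots,p_\ell=p$ where each $p_i$ is an element of $Q$, a logical axiom $x^2-x$ or $x+\bar x-1$ for a twin pair, a product $xp_j$ of an earlier $p_j$ with a variable $x$, or a combination $ap_j+bp_k$ of earlier lines with $a,b\in\mathbb{Q}$. A refutation is a proof of $1=0$. Its degree is the max degree of the $p_i$, and its monomial-size is the total number of monomials (with multiplicity) over all $p_i$. *)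

theory Defs
  imports Complex_Main "HOL-Library.Poly_Mapping"
begin

datatype var = X nat nat | Xb nat nat

type_synonym mono = "var \<Rightarrow>\<^sub>0 nat"
type_synonym rpoly = "mono \<Rightarrow>\<^sub>0 rat"

definition Var :: "var \<Rightarrow> rpoly" where
  "Var v = Poly_Mapping.single (Poly_Mapping.single v 1) 1"

definition Const :: "rat \<Rightarrow> rpoly" where
  "Const c = Poly_Mapping.single 0 c"

text \<open>Total degree of a monomial and of a polynomial (zero polynomial has degree 0).\<close>
definition mono_deg :: "mono \<Rightarrow> nat" where
  "mono_deg m = (\<Sum>v\<in>Poly_Mapping.keys m. Poly_Mapping.lookup m v)"

definition pdeg :: "rpoly \<Rightarrow> nat" where
  "pdeg p = (if Poly_Mapping.keys p = {} then 0 else Max (mono_deg ` Poly_Mapping.keys p))"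

definition nmonos :: "rpoly \<Rightarrow> nat" where
  "nmonos p = card (Poly_Mapping.keys p)"

definition vars :: "nat \<Rightarrow> var set" where
  "vars n = {X i j | i j. i \<in> {1..n} \<and> j \<in> {1..2*n}} \<union> {Xb i j | i j. i \<in> {1..n} \<and> j \<in> {1..2*n}}"

definition ks :: "nat \<Rightarrow> nat \<Rightarrow> rpoly" where
  "ks n i = (\<Sum>j\<in>{1..2*n}. Var (X i j)) - Const (of_nat n)"

text \<open>The constraints of Q_n, each written as a polynomial (meaning polynomial = 0).\<close>
definition Qn :: "nat \<Rightarrow> rpoly set" where
  "Qn n = {ks n 1 - Const (1/2)}
        \<union> {(ks n i)^2 - ks n (i+1) | i. i \<in> {1..n-1}}
        \<union> {(ks n n)^2}"

definition log_axioms :: "var set \<Rightarrow> rpoly set" where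
  "log_axioms V = {(Var v)^2 - Var v | v. v \<in> V}
     \<union> {Var (X i j) + Var (Xb i j) - 1 | i j. X i j \<in> V \<and> Xb i j \<in> V}"

definition pcr_step :: "rpoly set \<Rightarrow> var set \<Rightarrow> rpoly list \<Rightarrow> rpoly \<Rightarrow> bool" where
  "pcr_step Q V ps p \<longleftrightarrow>
     p \<in> Q \<or> p \<in> log_axioms V
     \<or> (\<exists>v\<in>V. \<exists>q\<in>set ps. p = Var v * q)
     \<or> (\<exists>a b :: rat. \<exists>q\<in>set ps. \<exists>r\<in>set ps. p = Const a * q + Const b * r)"

definition pcr_proof :: "rpoly set \<Rightarrow> var set \<Rightarrow> rpoly list \<Rightarrow> bool" where
  "pcr_proof Q V ps \<longleftrightarrow> (\<forall>k<length ps. pcr_step Q V (take k ps) (ps ! k))"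

definition pcr_refutation :: "rpoly set \<Rightarrow> var set \<Rightarrow> rpoly list \<Rightarrow> bool" where
  "pcr_refutation Q V ps \<longleftrightarrow> ps \<noteq> [] \<and> pcr_proof Q V ps \<and> last ps = 1"

definition proof_degree :: "rpoly list \<Rightarrow> nat" where
  "proof_degree ps = foldr (\<lambda>p d. max (pdeg p) d) ps 0"

definition monomial_size :: "rpoly list \<Rightarrow> nat" where
  "monomial_size ps = (\<Sum>p\<leftarrow>ps. nmonos p)"

end

theory Submission
  imports Defs
begin

text \<open>No logical axiom is needed: the constraints alone force ks_n^2 to a nonzero
  constant. Writing c_i = (1/2)^(2^(i-1)), one derives the lines ks_i - c_i for i = 1, ..., n.
  From ks_i - c_i the identity
  ks_i^2 - c_i^2 = (\<Sum>j. x_ij (ks_i - c_i)) + (c_i - n) (ks_i - c_i)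
  yields ks_i^2 - c_i^2 with O(n) lines of degree at most 2, and subtracting constraint (II)
  gives ks_(i+1) - c_i^2. At the last level ks_n^2 - c_n^2 and constraint (III) combine to the
  constant c_n^2. Every line is supported on the O(n^4) monomials of degree at most 2, and
  there are O(n^2) lines.\<close>

lemma Const_0 [simp]: "Const 0 = 0"
  by (simp add: Const_def)

lemma Const_1 [simp]: "Const 1 = 1"
  by (simp add: Const_def)

lemma Const_add: "Const (a + b) = Const a + Const b"
  by (simp add: Const_def Poly_Mapping.single_add)

lemma Const_diff: "Const (a - b) = Const a - Const b"
  by (simp add: Const_def Poly_Mapping.single_diff)

lemma Const_uminus: "Const (- a) = - Const a"
  by (simp add: Const_def single_uminus)

lemma Const_mult: "Const (a * b) = Const a * Const b"
  by (simp add: Const_def mult_single)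

lemma Const_power: "Const (a ^ k) = Const a ^ k"
  by (induction k) (simp_all add: Const_mult)

lemma keys_Const: "Poly_Mapping.keys (Const c) \<subseteq> {0}"
  by (simp add: Const_def)

lemma keys_Const_mult: "Poly_Mapping.keys (Const a * q) \<subseteq> Poly_Mapping.keys q"
proof
  fix m assume "m \<in> Poly_Mapping.keys (Const a * q)"
  then obtain m\<^sub>1 m\<^sub>2 where "m = m\<^sub>1 + m\<^sub>2" "m\<^sub>1 \<in> Poly_Mapping.keys (Const a)" "m\<^sub>2 \<in> Poly_Mapping.keys q"
    using keys_mult[of "Const a" q] by blast
  then show "m \<in> Poly_Mapping.keys q"
    using keys_Const[of a] by auto
qed

lemma keys_lin_comb:
  "Poly_Mapping.keys (Const a * q + Const b * r) \<subseteq> Poly_Mapping.keys q \<union> Poly_Mapping.keys r"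
  using keys_add[of "Const a * q" "Const b * r"] keys_Const_mult[of a q] keys_Const_mult[of b r]
  by blast

subsection \<open>Monomials of degree at most two\<close>

definition lin_monos :: "var set \<Rightarrow> mono set" where
  "lin_monos V = insert 0 ((\<lambda>v. Poly_Mapping.single v 1) ` V)"

definition quad_monos :: "var set \<Rightarrow> mono set" where
  "quad_monos V = (\<lambda>(a, b). a + b) ` (lin_monos V \<times> lin_monos V)"

lemma lin_monos_subset_quad_monos: "lin_monos V \<subseteq> quad_monos V"
  unfolding quad_monos_def lin_monos_def by (force intro: image_eqI[where x = "(_, 0)"])

lemma keys_mult_subset_quad_monos:
  assumes "Poly_Mapping.keys p \<subseteq> lin_monos V" "Poly_Mapping.keys q \<subseteq> lin_monos V"
  shows "Poly_Mapping.keys (p * q) \<subseteq> quad_monos V"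
  using keys_mult[of p q] assms unfolding quad_monos_def by blast

lemma keys_Var: "v \<in> V \<Longrightarrow> Poly_Mapping.keys (Var v) \<subseteq> lin_monos V"
  by (simp add: Var_def lin_monos_def)

lemma keys_Const_subset_lin_monos: "Poly_Mapping.keys (Const c) \<subseteq> lin_monos V"
  using keys_Const[of c] by (auto simp: lin_monos_def)

lemma mono_deg_eq_sum:
  assumes "finite S" "Poly_Mapping.keys m \<subseteq> S"
  shows "mono_deg m = sum (Poly_Mapping.lookup m) S"
  unfolding mono_deg_def
  by (rule sum.mono_neutral_left) (use assms in \<open>auto simp: in_keys_iff\<close>)

lemma mono_deg_add: "mono_deg (a + b) = mono_deg a + mono_deg b"
proof -
  let ?S = "Poly_Mapping.keys a \<union> Poly_Mapping.keys b"
  have "mono_deg (a + b) = sum (Poly_Mapping.lookup (a + b)) ?S"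
    using keys_add[of a b] by (intro mono_deg_eq_sum) auto
  also have "\<dots> = sum (Poly_Mapping.lookup a) ?S + sum (Poly_Mapping.lookup b) ?S"
    by (simp add: lookup_add sum.distrib)
  also have "\<dots> = mono_deg a + mono_deg b"
    by (subst (1 2) mono_deg_eq_sum[symmetric]) auto
  finally show ?thesis .
qed

lemma mono_deg_lin_monos: "m \<in> lin_monos V \<Longrightarrow> mono_deg m \<le> 1"
  by (auto simp: lin_monos_def mono_deg_def)

lemma mono_deg_quad_monos:
  assumes "m \<in> quad_monos V"
  shows "mono_deg m \<le> 2"
proof -
  obtain m\<^sub>1 m\<^sub>2 where "m = m\<^sub>1 + m\<^sub>2" "m\<^sub>1 \<in> lin_monos V" "m\<^sub>2 \<in> lin_monos V"
    using assms unfolding quad_monos_def by auto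
  then show ?thesis
    using mono_deg_lin_monos[of m\<^sub>1 V] mono_deg_lin_monos[of m\<^sub>2 V] by (simp add: mono_deg_add)
qed

lemma pdeg_le_2: "Poly_Mapping.keys p \<subseteq> quad_monos V \<Longrightarrow> pdeg p \<le> 2"
  unfolding pdeg_def using mono_deg_quad_monos by auto

lemma card_lin_monos: "finite V \<Longrightarrow> card (lin_monos V) \<le> card V + 1"
  unfolding lin_monos_def by (rule card_insert_le_m1) (simp_all add: card_image_le)

lemma finite_quad_monos: "finite V \<Longrightarrow> finite (quad_monos V)"
  by (simp add: quad_monos_def lin_monos_def)

lemma card_quad_monos:
  assumes "finite V"
  shows "card (quad_monos V) \<le> (card V + 1)\<^sup>2"
proof -
  have "card (quad_monos V) \<le> card (lin_monos V \<times> lin_monos V)"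
    unfolding quad_monos_def by (rule card_image_le) (simp add: lin_monos_def assms)
  also have "\<dots> = card (lin_monos V) * card (lin_monos V)"
    by (simp add: card_cartesian_product)
  also have "\<dots> \<le> (card V + 1) * (card V + 1)"
    using card_lin_monos[OF assms] by (intro mult_mono) auto
  finally show ?thesis by (simp add: power2_eq_square)
qed

definition affine_form :: "('a \<Rightarrow> var) \<Rightarrow> 'a set \<Rightarrow> rat \<Rightarrow> rpoly" where
  "affine_form f J d = (\<Sum>j\<in>J. Var (f j)) - Const d"

lemma affine_form_minus_Const: "affine_form f J d - Const c = affine_form f J (d + c)"
  by (simp add: affine_form_def Const_add)

lemma keys_affine_form:
  assumes "f ` J \<subseteq> V"
  shows "Poly_Mapping.keys (affine_form f J d) \<subseteq> lin_monos V"
proof -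
  have "Poly_Mapping.keys (\<Sum>j\<in>J. Var (f j)) \<subseteq> lin_monos V"
    using assms keys_Var by (intro order_trans[OF keys_sum] UN_least) auto
  then show ?thesis
    unfolding affine_form_def
    by (intro order_trans[OF keys_diff] Un_least keys_Const_subset_lin_monos)
qed

lemma affine_form_square_identity:
  "(\<Sum>j\<in>J. Var (f j) * (affine_form f J d - Const c))
     + Const (c - d) * (affine_form f J d - Const c)
   = (affine_form f J d)\<^sup>2 - Const (c\<^sup>2)"
proof -
  define S where "S = (\<Sum>j\<in>J. Var (f j))"
  have ring_identity: "S * (S - D - C) + (C - D) * (S - D - C) = (S - D)\<^sup>2 - C\<^sup>2" for D C :: rpoly
    by (simp add: power2_eq_square algebra_simps)
  have "(\<Sum>j\<in>J. Var (f j) * (affine_form f J d - Const c)) = S * (S - Const d - Const c)"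
    unfolding S_def affine_form_def by (rule sum_distrib_right[symmetric])
  then show ?thesis
    unfolding Const_diff Const_power using ring_identity
    by (simp add: affine_form_def flip: S_def)
qed

subsection \<open>Building PCR proofs\<close>

lemma pcr_proof_snoc:
  assumes "pcr_proof Q V ps" "pcr_step Q V ps p"
  shows "pcr_proof Q V (ps @ [p])"
  using assms unfolding pcr_proof_def by (auto simp: nth_append less_Suc_eq)

lemma pcr_step_axiom: "p \<in> Q \<Longrightarrow> pcr_step Q V ps p"
  by (simp add: pcr_step_def)

lemma pcr_step_Var_mult: "v \<in> V \<Longrightarrow> q \<in> set ps \<Longrightarrow> pcr_step Q V ps (Var v * q)"
  unfolding pcr_step_def by blast

lemma pcr_step_lin_comb:
  "q \<in> set ps \<Longrightarrow> r \<in> set ps \<Longrightarrow> pcr_step Q V ps (Const a * q + Const b * r)"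
  unfolding pcr_step_def by blast

lemma pcr_step_diff: "q \<in> set ps \<Longrightarrow> r \<in> set ps \<Longrightarrow> pcr_step Q V ps (q - r)"
  using pcr_step_lin_comb[of q ps r Q V 1 "-1"] by (simp add: Const_uminus)

lemma pcr_step_one:
  assumes "q \<in> set ps" "q - Const e \<in> set ps" "e \<noteq> 0"
  shows "pcr_step Q V ps 1"
proof -
  have "Const (1 / e) * q + Const (- (1 / e)) * (q - Const e) = Const (1 / e) * Const e"
    by (simp add: Const_uminus algebra_simps)
  also have "\<dots> = 1"
    using assms(3) by (simp flip: Const_mult)
  finally show ?thesis
    using pcr_step_lin_comb[OF assms(1,2)] by metis
qed

text \<open>Each summand costs a product line and a partial-sum line; the empty sum costs the
  line \<open>Const 0 * L + Const 0 * L\<close>.\<close>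
lemma pcr_extend_sum_Var_mult:
  assumes ps: "pcr_proof Q V ps" and L: "L \<in> set ps" "Poly_Mapping.keys L \<subseteq> lin_monos V"
    and J: "finite J" "f ` J \<subseteq> V"
  shows "\<exists>qs. pcr_proof Q V (ps @ qs) \<and> (\<forall>q\<in>set qs. Poly_Mapping.keys q \<subseteq> quad_monos V)
    \<and> length qs = 2 * card J + 1 \<and> (\<Sum>j\<in>J. Var (f j) * L) \<in> set qs"
  using J
proof (induction J rule: finite_induct)
  case empty
  have "pcr_proof Q V (ps @ [Const 0 * L + Const 0 * L])"
    using ps L(1) by (intro pcr_proof_snoc pcr_step_lin_comb)
  then show ?case by (intro exI[of _ "[0]"]) simp
next
  case (insert j J)
  then obtain qs where qs: "pcr_proof Q V (ps @ qs)"
    "\<forall>q\<in>set qs. Poly_Mapping.keys q \<subseteq> quad_monos V"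
    "length qs = 2 * card J + 1" "(\<Sum>j\<in>J. Var (f j) * L) \<in> set qs"
    by auto
  let ?s = "\<Sum>j\<in>J. Var (f j) * L" and ?p = "Var (f j) * L"
    and ?t = "\<Sum>j\<in>insert j J. Var (f j) * L"
  have v: "f j \<in> V" using insert.prems by simp
  have t_eq: "?t = Const 1 * ?s + Const 1 * ?p"
    using insert.hyps by (simp add: add.commute)
  have proof_p: "pcr_proof Q V ((ps @ qs) @ [?p])"
    using L(1) by (intro pcr_proof_snoc[OF qs(1)] pcr_step_Var_mult[OF v]) auto
  have "pcr_proof Q V (((ps @ qs) @ [?p]) @ [?t])"
    unfolding t_eq using qs(4) by (intro pcr_proof_snoc[OF proof_p] pcr_step_lin_comb) auto
  moreover have keys_p: "Poly_Mapping.keys ?p \<subseteq> quad_monos V"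
    using keys_mult_subset_quad_monos[OF keys_Var[OF v] L(2)] .
  moreover have "Poly_Mapping.keys ?t \<subseteq> quad_monos V"
    unfolding t_eq using keys_lin_comb[of 1 ?s 1 ?p] keys_p qs(2,4) by blast
  ultimately show ?case
    using qs(2,3) insert.hyps by (intro exI[of _ "qs @ [?p, ?t]"]) auto
qed

lemma pcr_extend_square_affine_form:
  assumes ps: "pcr_proof Q V ps" and L: "affine_form f J d - Const c \<in> set ps"
    and J: "finite J" "f ` J \<subseteq> V"
  shows "\<exists>qs. pcr_proof Q V (ps @ qs) \<and> (\<forall>q\<in>set qs. Poly_Mapping.keys q \<subseteq> quad_monos V)
    \<and> length qs = 2 * card J + 2 \<and> (affine_form f J d)\<^sup>2 - Const (c\<^sup>2) \<in> set qs"
proof -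
  let ?L = "affine_form f J d - Const c"
  have keys_L: "Poly_Mapping.keys ?L \<subseteq> lin_monos V"
    unfolding affine_form_minus_Const using keys_affine_form[OF J(2)] .
  obtain qs where qs: "pcr_proof Q V (ps @ qs)"
    "\<forall>q\<in>set qs. Poly_Mapping.keys q \<subseteq> quad_monos V"
    "length qs = 2 * card J + 1" "(\<Sum>j\<in>J. Var (f j) * ?L) \<in> set qs"
    using pcr_extend_sum_Var_mult[OF ps L keys_L J] by blast
  let ?s = "\<Sum>j\<in>J. Var (f j) * ?L" and ?sq = "(affine_form f J d)\<^sup>2 - Const (c\<^sup>2)"
  have sq_eq: "?sq = Const 1 * ?s + Const (c - d) * ?L"
    using affine_form_square_identity[of f J d c] by simp
  have "pcr_proof Q V ((ps @ qs) @ [?sq])"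
    unfolding sq_eq using L qs(4) by (intro pcr_proof_snoc[OF qs(1)] pcr_step_lin_comb) auto
  moreover have "Poly_Mapping.keys ?sq \<subseteq> quad_monos V"
    unfolding sq_eq using keys_lin_comb[of 1 ?s "c - d" ?L] qs(2,4) keys_L lin_monos_subset_quad_monos
    by blast
  ultimately show ?thesis
    using qs(2,3) by (intro exI[of _ "qs @ [?sq]"]) auto
qed

lemma pcr_proof_degree_le_2:
  "\<forall>p\<in>set ps. Poly_Mapping.keys p \<subseteq> quad_monos V \<Longrightarrow> proof_degree ps \<le> 2"
  by (induction ps) (auto simp: proof_degree_def pdeg_le_2)

lemma pcr_monomial_size_le:
  assumes "finite V" "\<forall>p\<in>set ps. Poly_Mapping.keys p \<subseteq> quad_monos V"
  shows "monomial_size ps \<le> length ps * (card V + 1)\<^sup>2"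
proof -
  have "nmonos p \<le> (card V + 1)\<^sup>2" if "p \<in> set ps" for p
  proof -
    have "nmonos p \<le> card (quad_monos V)"
      unfolding nmonos_def using that assms by (intro card_mono finite_quad_monos) auto
    then show ?thesis
      using card_quad_monos[OF assms(1)] by linarith
  qed
  then have "monomial_size ps \<le> (\<Sum>p\<leftarrow>ps. (card V + 1)\<^sup>2)"
    unfolding monomial_size_def by (intro sum_list_mono)
  then show ?thesis
    by (simp add: sum_list_triv)
qed

subsection \<open>The instance Q_n\<close>

lemma ks_eq_affine_form: "ks n i = affine_form (X i) {1..2 * n} (of_nat n)"
  by (simp add: ks_def affine_form_def)

lemma X_image_subset_vars: "i \<in> {1..n} \<Longrightarrow> X i ` {1..2 * n} \<subseteq> vars n"
  by (auto simp: vars_def)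

lemma keys_ks_minus_Const:
  "i \<in> {1..n} \<Longrightarrow> Poly_Mapping.keys (ks n i - Const c) \<subseteq> lin_monos (vars n)"
  unfolding ks_eq_affine_form affine_form_minus_Const
  by (rule keys_affine_form[OF X_image_subset_vars])

lemma pcr_extend_square_ks:
  assumes "pcr_proof (Qn n) (vars n) ps" "ks n i - Const c \<in> set ps" "i \<in> {1..n}"
  shows "\<exists>qs. pcr_proof (Qn n) (vars n) (ps @ qs)
    \<and> (\<forall>q\<in>set qs. Poly_Mapping.keys q \<subseteq> quad_monos (vars n))
    \<and> length qs = 4 * n + 2 \<and> (ks n i)\<^sup>2 - Const (c\<^sup>2) \<in> set qs"
  using pcr_extend_square_affine_form[of "Qn n" "vars n" ps "X i" "{1..2 * n}" "of_nat n" c]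
    assms X_image_subset_vars[OF assms(3)]
  by (simp add: ks_eq_affine_form)

lemma vars_eq_image:
  "vars n = (\<lambda>(i, j). X i j) ` ({1..n} \<times> {1..2 * n}) \<union> (\<lambda>(i, j). Xb i j) ` ({1..n} \<times> {1..2 * n})"
  unfolding vars_def by auto

lemma finite_vars: "finite (vars n)"
  unfolding vars_eq_image by simp

lemma card_vars_le: "card (vars n) \<le> 4 * n\<^sup>2"
proof -
  let ?I = "{1..n} \<times> {1..2 * n}"
  have "card (vars n) \<le> card ((\<lambda>(i, j). X i j) ` ?I) + card ((\<lambda>(i, j). Xb i j) ` ?I)"
    unfolding vars_eq_image by (rule card_Un_le)
  also have "\<dots> \<le> card ?I + card ?I"
    by (intro add_mono card_image_le) auto
  finally show ?thesis
    by (simp add: card_cartesian_product power2_eq_square)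
qed

text \<open>Here i = Suc k, so the constant is c_i; each level costs 4n + 4 lines.\<close>
lemma pcr_derive_ks_level:
  assumes "Suc k \<le> n"
  shows "\<exists>ps. pcr_proof (Qn n) (vars n) ps
    \<and> (\<forall>p\<in>set ps. Poly_Mapping.keys p \<subseteq> quad_monos (vars n))
    \<and> length ps \<le> (4 * n + 4) * Suc k \<and> ks n (Suc k) - Const ((1 / 2) ^ 2 ^ k) \<in> set ps"
  using assms
proof (induction k)
  case 0
  let ?p = "ks n 1 - Const (1 / 2)"
  have "pcr_proof (Qn n) (vars n) ([] @ [?p])"
    by (intro pcr_proof_snoc pcr_step_axiom) (auto simp: pcr_proof_def Qn_def)
  moreover have "Poly_Mapping.keys ?p \<subseteq> quad_monos (vars n)"
    using keys_ks_minus_Const[of 1 n] 0 lin_monos_subset_quad_monos by auto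
  ultimately show ?case
    by (intro exI[of _ "[?p]"]) auto
next
  case (Suc k)
  define c :: rat where "c = (1 / 2) ^ 2 ^ k"
  have i: "Suc k \<in> {1..n}" and i': "Suc (Suc k) \<in> {1..n}"
    using Suc.prems by auto
  obtain ps where ps: "pcr_proof (Qn n) (vars n) ps"
    "\<forall>p\<in>set ps. Poly_Mapping.keys p \<subseteq> quad_monos (vars n)"
    "length ps \<le> (4 * n + 4) * Suc k" "ks n (Suc k) - Const c \<in> set ps"
    using Suc c_def by auto
  obtain qs where qs: "pcr_proof (Qn n) (vars n) (ps @ qs)"
    "\<forall>q\<in>set qs. Poly_Mapping.keys q \<subseteq> quad_monos (vars n)"
    "length qs = 4 * n + 2" "(ks n (Suc k))\<^sup>2 - Const (c\<^sup>2) \<in> set qs"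
    using pcr_extend_square_ks[OF ps(1,4) i] by blast
  let ?A = "(ks n (Suc k))\<^sup>2 - ks n (Suc (Suc k))"
  let ?L = "ks n (Suc (Suc k)) - Const (c\<^sup>2)"
  have "?A \<in> Qn n"
    using Suc.prems unfolding Qn_def by (auto intro!: exI[of _ "Suc k"])
  then have proof_A: "pcr_proof (Qn n) (vars n) ((ps @ qs) @ [?A])"
    by (intro pcr_proof_snoc[OF qs(1)] pcr_step_axiom)
  have "?L = ((ks n (Suc k))\<^sup>2 - Const (c\<^sup>2)) - ?A"
    by simp
  then have "pcr_proof (Qn n) (vars n) (((ps @ qs) @ [?A]) @ [?L])"
    using qs(4) by (simp only:) (intro pcr_proof_snoc[OF proof_A] pcr_step_diff, auto)
  moreover have "Poly_Mapping.keys ?A \<subseteq> quad_monos (vars n)"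
  proof (rule order_trans[OF keys_diff Un_least])
    show "Poly_Mapping.keys ((ks n (Suc k))\<^sup>2) \<subseteq> quad_monos (vars n)"
      using keys_mult_subset_quad_monos keys_ks_minus_Const[OF i, of 0]
      by (simp add: power2_eq_square)
    show "Poly_Mapping.keys (ks n (Suc (Suc k))) \<subseteq> quad_monos (vars n)"
      using order_trans[OF keys_ks_minus_Const[OF i', of 0] lin_monos_subset_quad_monos] by simp
  qed
  moreover have "Poly_Mapping.keys ?L \<subseteq> quad_monos (vars n)"
    using keys_ks_minus_Const[OF i'] lin_monos_subset_quad_monos by blast
  moreover have "c\<^sup>2 = (1 / 2) ^ 2 ^ Suc k"
    by (simp add: c_def power_mult[symmetric] mult.commute)
  ultimately show ?case
    using ps(2,3) qs(2,3) by (intro exI[of _ "ps @ qs @ [?A, ?L]"]) auto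
qed

lemma Qn_refutation_quad_monos:
  assumes "1 \<le> n"
  shows "\<exists>ps. pcr_refutation (Qn n) (vars n) ps
    \<and> (\<forall>p\<in>set ps. Poly_Mapping.keys p \<subseteq> quad_monos (vars n))
    \<and> length ps \<le> (4 * n + 4) * (n + 1)"
proof -
  obtain k where n: "n = Suc k"
    using assms by (cases n) auto
  define c :: rat where "c = (1 / 2) ^ 2 ^ k"
  have i: "n \<in> {1..n}"
    using assms by simp
  obtain ps where ps: "pcr_proof (Qn n) (vars n) ps"
    "\<forall>p\<in>set ps. Poly_Mapping.keys p \<subseteq> quad_monos (vars n)"
    "length ps \<le> (4 * n + 4) * n" "ks n n - Const c \<in> set ps"
    using pcr_derive_ks_level[of k n] unfolding c_def n by auto
  obtain qs where qs: "pcr_proof (Qn n) (vars n) (ps @ qs)"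
    "\<forall>q\<in>set qs. Poly_Mapping.keys q \<subseteq> quad_monos (vars n)"
    "length qs = 4 * n + 2" "(ks n n)\<^sup>2 - Const (c\<^sup>2) \<in> set qs"
    using pcr_extend_square_ks[OF ps(1,4) i] by blast
  let ?B = "(ks n n)\<^sup>2"
  have "?B \<in> Qn n"
    by (simp add: Qn_def)
  then have proof_B: "pcr_proof (Qn n) (vars n) ((ps @ qs) @ [?B])"
    by (intro pcr_proof_snoc[OF qs(1)] pcr_step_axiom)
  have "c\<^sup>2 \<noteq> 0"
    by (simp add: c_def)
  then have "pcr_proof (Qn n) (vars n) (((ps @ qs) @ [?B]) @ [1])"
    using qs(4) by (intro pcr_proof_snoc[OF proof_B] pcr_step_one[of ?B _ "c\<^sup>2"]) auto
  moreover have "Poly_Mapping.keys ?B \<subseteq> quad_monos (vars n)"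
    using keys_mult_subset_quad_monos keys_ks_minus_Const[OF i, of 0]
    by (simp add: power2_eq_square)
  moreover have "Poly_Mapping.keys (1 :: rpoly) \<subseteq> quad_monos (vars n)"
    using keys_Const_subset_lin_monos[of 1] lin_monos_subset_quad_monos by auto
  ultimately show ?thesis
    using ps(2,3) qs(2,3) unfolding pcr_refutation_def
    by (intro exI[of _ "ps @ qs @ [?B, 1]"]) (auto simp: algebra_simps)
qed

lemma size_bound_poly:
  fixes n :: nat
  assumes "1 \<le> n"
  shows "(4 * n + 4) * (n + 1) * (4 * n\<^sup>2 + 1)\<^sup>2 \<le> 400 * n ^ 6"
proof -
  have "1 \<le> n\<^sup>2"
    using assms by simp
  then have "(4 * n + 4) * (n + 1) * (4 * n\<^sup>2 + 1)\<^sup>2 \<le> (8 * n) * (2 * n) * (5 * n\<^sup>2)\<^sup>2"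
    using assms by (intro mult_mono power_mono) auto
  also have "\<dots> = 400 * n ^ 6"
    by algebra
  finally show ?thesis .
qed

theorem lemma5:
  "\<exists>c k :: nat. \<forall>n\<ge>1. \<exists>ps. pcr_refutation (Qn n) (vars n) ps
      \<and> proof_degree ps \<le> 2 \<and> monomial_size ps \<le> c * n ^ k"
proof -
  have "\<exists>ps. pcr_refutation (Qn n) (vars n) ps \<and> proof_degree ps \<le> 2
      \<and> monomial_size ps \<le> 400 * n ^ 6" if n: "n \<ge> 1" for n
  proof -
    obtain ps where ps: "pcr_refutation (Qn n) (vars n) ps"
      "\<forall>p\<in>set ps. Poly_Mapping.keys p \<subseteq> quad_monos (vars n)"
      "length ps \<le> (4 * n + 4) * (n + 1)"
      using Qn_refutation_quad_monos[OF n] by blast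
    have "monomial_size ps \<le> length ps * (card (vars n) + 1)\<^sup>2"
      by (rule pcr_monomial_size_le[OF finite_vars ps(2)])
    also have "\<dots> \<le> (4 * n + 4) * (n + 1) * (4 * n\<^sup>2 + 1)\<^sup>2"
      using ps(3) card_vars_le[of n] by (intro mult_mono power_mono) auto
    also have "\<dots> \<le> 400 * n ^ 6"
      by (rule size_bound_poly[OF n])
    finally show ?thesis
      using ps(1) pcr_proof_degree_le_2[OF ps(2)] by blast
  qed
  then show ?thesis
    by blast
qed

end
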